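(* For $\epsilon>0$ and $\rho\ge0$ let $\mathbf G_{\epsilon\rho}(s):=\mathbf C(sI-\mathbf A_{\epsilon\rho})^{-1}\mathbf B$. Then for every fixed $s\in\mathbb C\setminus\{-m_\rho,-\mu_\rho\}$, $\lim_{\epsilon\to0}\mathbf G_{\epsilon\rho}(s)=\mathbf H_\rho(s)$, where $$\mathbf H_\rho(s):=\begin{bmatrix}\bar\Pi_{1u}&0\\\Pi_{2u}&\mu I\end{bmatrix}\begin{bmatrix}g_{m\rho}(s)I&0\\0&g_{\mu\rho}(s)I\end{bmatrix}\begin{bmatrix}-\bar\Pi_{1u}^\top&-\frac1\mu\Pi_{2u}^\top\\0&I\end{bmatrix},$$ with $g_{m\rho}(s):=(s+m_\rho)^{-1}$ and $g_{\mu\rho}(s):=(s+\mu_\rho)^{-1}$.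
   Context: Let $A\in\mathbb R^{n\times n}$ be Hurwitz, $B\in\mathbb R^{n\times p}$, and for $i=1,2$ let $C_i\in\mathbb R^{r_i\times n}$. Let $\Pi_{iu}:=-C_iA^{-1}B$ and $\bar\Pi_{1u}:=\begin{bmatrix}I\\\Pi_{1u}\end{bmatrix}$. Let $m>0$, $\mu>0$, $\rho\ge0$, $m_\rho:=m-\rho$ and $\mu_\rho:=\mu-\rho$. Define $$\mathbf A_\epsilon:=\begin{bmatrix}\frac1\epsilon A&\frac1\epsilon B&0\\0&-mI&0\\0&0&-\mu I\end{bmatrix},\qquad \mathbf A_{\epsilon\rho}:=\mathbf A_\epsilon+\rho I,$$ $$\mathbf B=\begin{bmatrix}0&0&0\\-I&-\Pi_{1u}^\top&-\frac1\mu\Pi_{2u}^\top\\0&0&I\end{bmatrix},\qquad \mathbf C=\begin{bmatrix}0&I&0\\C_1&0&0\\C_2&0&\mu I\end{bmatrix},$$ where the diagonal blocks of $\mathbf A_\epsilon$ have sizes $n,p,r_2$, and the identity blocks of $\mathbf B$ and $\mathbf C$ have compatible sizes. *)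

theory Defs
  imports "HOL-Analysis.Analysis"
begin

definition cmat :: "real^('c::finite)^('r::finite) \<Rightarrow> complex^'c^'r" where
  "cmat M = (\<chi> i j. complex_of_real (M $ i $ j))"

definition hurwitz :: "real^('n::finite)^'n \<Rightarrow> bool" where
  "hurwitz A \<longleftrightarrow> (\<forall>l::complex. det (mat l - cmat A) = 0 \<longrightarrow> Re l < 0)"

text \<open>Block matrices; block row/column index types are sums (blocks in order).\<close>
definition block2 ::
  "('a::type)^('c1::finite)^('r1::finite) \<Rightarrow> 'a^('c2::finite)^'r1 \<Rightarrow> 'a^'c1^('r2::finite) \<Rightarrow> 'a^'c2^'r2 \<Rightarrow> 'a^('c1+'c2)^('r1+'r2)" where
  "block2 M11 M12 M21 M22 = (\<chi> i j. case i of
      Inl a \<Rightarrow> (case j of Inl b \<Rightarrow> M11$a$b | Inr b \<Rightarrow> M12$a$b)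
    | Inr a \<Rightarrow> (case j of Inl b \<Rightarrow> M21$a$b | Inr b \<Rightarrow> M22$a$b))"

definition block3 ::
  "('a::type)^('c1::finite)^('r1::finite) \<Rightarrow> 'a^('c2::finite)^'r1 \<Rightarrow> 'a^('c3::finite)^'r1 \<Rightarrow>
   'a^'c1^('r2::finite) \<Rightarrow> 'a^'c2^'r2 \<Rightarrow> 'a^'c3^'r2 \<Rightarrow>
   'a^'c1^('r3::finite) \<Rightarrow> 'a^'c2^'r3 \<Rightarrow> 'a^'c3^'r3 \<Rightarrow> 'a^('c1+('c2+'c3))^('r1+('r2+'r3))" where
  "block3 M11 M12 M13 M21 M22 M23 M31 M32 M33 = (\<chi> i j. case i of
      Inl a \<Rightarrow> (case j of Inl b \<Rightarrow> M11$a$b | Inr (Inl b) \<Rightarrow> M12$a$b | Inr (Inr b) \<Rightarrow> M13$a$b)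
    | Inr (Inl a) \<Rightarrow> (case j of Inl b \<Rightarrow> M21$a$b | Inr (Inl b) \<Rightarrow> M22$a$b | Inr (Inr b) \<Rightarrow> M23$a$b)
    | Inr (Inr a) \<Rightarrow> (case j of Inl b \<Rightarrow> M31$a$b | Inr (Inl b) \<Rightarrow> M32$a$b | Inr (Inr b) \<Rightarrow> M33$a$b))"

definition block32 ::
  "('a::type)^('c1::finite)^('r1::finite) \<Rightarrow> 'a^('c2::finite)^'r1 \<Rightarrow> 'a^'c1^('r2::finite) \<Rightarrow> 'a^'c2^'r2 \<Rightarrow>
   'a^'c1^('r3::finite) \<Rightarrow> 'a^'c2^'r3 \<Rightarrow> 'a^('c1+'c2)^('r1+('r2+'r3))" where
  "block32 M11 M12 M21 M22 M31 M32 = (\<chi> i j. case i of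
      Inl a \<Rightarrow> (case j of Inl b \<Rightarrow> M11$a$b | Inr b \<Rightarrow> M12$a$b)
    | Inr (Inl a) \<Rightarrow> (case j of Inl b \<Rightarrow> M21$a$b | Inr b \<Rightarrow> M22$a$b)
    | Inr (Inr a) \<Rightarrow> (case j of Inl b \<Rightarrow> M31$a$b | Inr b \<Rightarrow> M32$a$b))"

definition block23 ::
  "('a::type)^('c1::finite)^('r1::finite) \<Rightarrow> 'a^('c2::finite)^'r1 \<Rightarrow> 'a^('c3::finite)^'r1 \<Rightarrow>
   'a^'c1^('r2::finite) \<Rightarrow> 'a^'c2^'r2 \<Rightarrow> 'a^'c3^'r2 \<Rightarrow> 'a^('c1+('c2+'c3))^('r1+'r2)" where
  "block23 M11 M12 M13 M21 M22 M23 = (\<chi> i j. case i of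
      Inl a \<Rightarrow> (case j of Inl b \<Rightarrow> M11$a$b | Inr (Inl b) \<Rightarrow> M12$a$b | Inr (Inr b) \<Rightarrow> M13$a$b)
    | Inr a \<Rightarrow> (case j of Inl b \<Rightarrow> M21$a$b | Inr (Inl b) \<Rightarrow> M22$a$b | Inr (Inr b) \<Rightarrow> M23$a$b))"

definition Piu :: "real^('n::finite)^'n \<Rightarrow> real^('p::finite)^'n \<Rightarrow> real^'n^('r::finite) \<Rightarrow> complex^'p^'r" where
  "Piu A B Ci = cmat (- (Ci ** matrix_inv A ** B))"

definition Aeps :: "real^('n::finite)^'n \<Rightarrow> real^('p::finite)^'n \<Rightarrow> real \<Rightarrow> real \<Rightarrow> real
    \<Rightarrow> real^('n+('p+('r2::finite)))^('n+('p+'r2))" where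
  "Aeps A B m mu eps = block3
      ((1/eps) *\<^sub>R A) ((1/eps) *\<^sub>R B) 0
      0 (mat (-m)) 0
      0 0 (mat (-mu))"

definition Aepsrho :: "real^('n::finite)^'n \<Rightarrow> real^('p::finite)^'n \<Rightarrow> real \<Rightarrow> real \<Rightarrow> real \<Rightarrow> real
    \<Rightarrow> real^('n+('p+('r2::finite)))^('n+('p+'r2))" where
  "Aepsrho A B m mu eps rho = Aeps A B m mu eps + mat rho"

definition Bbold :: "real^('n::finite)^'n \<Rightarrow> real^('p::finite)^'n \<Rightarrow> real^'n^('r1::finite) \<Rightarrow> real^'n^('r2::finite) \<Rightarrow> real
    \<Rightarrow> complex^('p+('r1+'r2))^('n+('p+'r2))" where
  "Bbold A B C1 C2 mu = block3
      0 0 0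
      (- mat 1) (- transpose (Piu A B C1)) (- ((1/mu) *\<^sub>R transpose (Piu A B C2)))
      0 0 (mat 1)"

definition Cbold :: "real^('n::finite)^('r1::finite) \<Rightarrow> real^'n^('r2::finite) \<Rightarrow> real
    \<Rightarrow> complex^('n+(('p::finite)+'r2))^('p+('r1+'r2))" where
  "Cbold C1 C2 mu = block3
      0 (mat 1) 0
      (cmat C1) 0 0
      (cmat C2) 0 (mat (complex_of_real mu))"

definition Gbold :: "real^('n::finite)^'n \<Rightarrow> real^('p::finite)^'n \<Rightarrow> real^'n^('r1::finite) \<Rightarrow> real^'n^('r2::finite)
    \<Rightarrow> real \<Rightarrow> real \<Rightarrow> real \<Rightarrow> real \<Rightarrow> complex \<Rightarrow> complex^('p+('r1+'r2))^('p+('r1+'r2))" where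
  "Gbold A B C1 C2 m mu eps rho s =
     Cbold C1 C2 mu ** matrix_inv (mat s - cmat (Aepsrho A B m mu eps rho)) ** Bbold A B C1 C2 mu"

text \<open>H_rho(s); the block [I; Pi_1u] = bar Pi_1u is written out.\<close>
definition Hbold :: "real^('n::finite)^'n \<Rightarrow> real^('p::finite)^'n \<Rightarrow> real^'n^('r1::finite) \<Rightarrow> real^'n^('r2::finite)
    \<Rightarrow> real \<Rightarrow> real \<Rightarrow> real \<Rightarrow> complex \<Rightarrow> complex^('p+('r1+'r2))^('p+('r1+'r2))" where
  "Hbold A B C1 C2 m mu rho s =
     (block32
        (mat 1) 0
        (Piu A B C1) 0
        (Piu A B C2) (mat (complex_of_real mu))
      :: complex^('p+'r2)^('p+('r1+'r2)))
     ** block2 (mat (inverse (s + complex_of_real (m - rho)))) 0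
               0 (mat (inverse (s + complex_of_real (mu - rho))))
     ** block23
        (- mat 1) (- transpose (Piu A B C1)) (- ((1/mu) *\<^sub>R transpose (Piu A B C2)))
        0 0 (mat 1)"

end

theory Submission
  imports Defs
begin

text \<open>Multiply the first block row of \<open>sI - A\<^sub>\<epsilon>\<^sub>\<rho>\<close> by \<open>\<epsilon>\<close>. The resulting matrix
  \<open>N(\<epsilon>)\<close> is affine in \<open>\<epsilon>\<close>, and \<open>N(0)\<close> is block upper triangular with diagonal blocks
  \<open>-A\<close>, \<open>(s + m\<^sub>\<rho>)I\<close>, \<open>(s + \<mu>\<^sub>\<rho>)I\<close>, all invertible because \<open>A\<close> is Hurwitz and
  \<open>s \<noteq> -m\<^sub>\<rho>, -\<mu>\<^sub>\<rho>\<close>. The first block row of \<open>B\<close> vanishes, so undoing the scaling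
  does not change the product: \<open>G\<^sub>\<epsilon>\<^sub>\<rho>(s) = C N(\<epsilon>)\<^sup>-\<^sup>1 B\<close>. By continuity of matrix
  inversion (Cramer's rule) this tends to \<open>C N(0)\<^sup>-\<^sup>1 B\<close>, and multiplying out the blocks of
  the explicit inverse of \<open>N(0)\<close> gives \<open>H\<^sub>\<rho>(s)\<close>.\<close>

lemma matrix_inv_unique:
  fixes X Y :: "'a::field^'n^'n"
  assumes "X ** Y = mat 1"
  shows "matrix_inv X = Y"
proof -
  have "\<exists>Z. X ** Z = mat 1 \<and> Z ** X = mat 1"
    using assms matrix_left_right_inverse by blast
  then have left_inverse: "matrix_inv X ** X = mat 1"
    unfolding matrix_inv_def by (rule someI2_ex) blast
  have "matrix_inv X = matrix_inv X ** (X ** Y)" by (simp add: assms)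
  also have "\<dots> = Y" by (simp add: matrix_mul_assoc left_inverse)
  finally show ?thesis .
qed

lemma matrix_inv_right:
  fixes X :: "'a::field^'n^'n"
  assumes "det X \<noteq> 0"
  shows "X ** matrix_inv X = mat 1"
  using assms matrix_inv_unique invertible_det_nz invertible_right_inverse by metis

lemma matrix_inv_cramer:
  fixes X :: "'a::field^'n^'n"
  assumes "det X \<noteq> 0"
  shows "matrix_inv X $ i $ k = det (\<chi> a b. if b = i then (if a = k then 1 else 0) else X $ a $ b) / det X"
proof -
  let ?x = "\<chi> j. matrix_inv X $ j $ k"
  have "X *v ?x = (\<chi> a. if a = k then 1 else 0)"
    using matrix_inv_right[OF assms]
    by (simp add: vec_eq_iff matrix_vector_mult_def matrix_matrix_mult_def mat_def)
  then have "?x = (\<chi> j. det (\<chi> a b. if b = j then (\<chi> a. if a = k then 1 else 0) $ a else X $ a $ b) / det X)"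
    using cramer[OF assms] by blast
  from arg_cong[where f = "\<lambda>v. v $ i", OF this] show ?thesis
    by (simp only: vec_lambda_beta)
qed

lemma tendsto_matrix_mult [tendsto_intros]:
  fixes f :: "'x \<Rightarrow> 'a::real_normed_field^'n^'m"
  assumes "(f \<longlongrightarrow> X) F" "(g \<longlongrightarrow> Y) F"
  shows "((\<lambda>x. f x ** g x) \<longlongrightarrow> X ** Y) F"
  unfolding matrix_matrix_mult_def by (intro tendsto_intros assms)

lemma tendsto_det [tendsto_intros]:
  fixes f :: "'x \<Rightarrow> 'a::real_normed_field^'n^'n"
  assumes "(f \<longlongrightarrow> X) F"
  shows "((\<lambda>x. det (f x)) \<longlongrightarrow> det X) F"
  unfolding det_def by (intro tendsto_intros assms)

lemma tendsto_matrix_inv: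
  fixes f :: "'x \<Rightarrow> 'a::real_normed_field^'n^'n"
  assumes f: "(f \<longlongrightarrow> X) F" and X: "det X \<noteq> 0"
  shows "((\<lambda>x. matrix_inv (f x)) \<longlongrightarrow> matrix_inv X) F"
proof -
  define cramer_inv :: "'a^'n^'n \<Rightarrow> 'a^'n^'n" where
    "cramer_inv Y = (\<chi> i k. det (\<chi> a b. if b = i then (if a = k then 1 else 0) else Y $ a $ b) / det Y)"
    for Y
  have replaced_column: "((\<lambda>x. \<chi> a b. if b = i then (if a = k then 1 else 0) else f x $ a $ b)
      \<longlongrightarrow> (\<chi> a b. if b = i then (if a = k then 1 else 0) else X $ a $ b)) F" for i k :: 'n
  proof (intro tendsto_vec_lambda)
    show "((\<lambda>x. if b = i then (if a = k then 1 else 0) else f x $ a $ b)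
      \<longlongrightarrow> (if b = i then (if a = k then 1 else 0) else X $ a $ b)) F" for a b
      by (cases "b = i") (simp_all add: f tendsto_vec_nth)
  qed
  then have "((\<lambda>x. cramer_inv (f x)) \<longlongrightarrow> cramer_inv X) F"
    unfolding cramer_inv_def by (intro tendsto_vec_lambda tendsto_divide tendsto_det replaced_column f X)
  moreover have "\<forall>\<^sub>F x in F. cramer_inv (f x) = matrix_inv (f x)"
    using tendsto_imp_eventually_ne[OF tendsto_det[OF f] X]
    by eventually_elim (simp add: vec_eq_iff matrix_inv_cramer cramer_inv_def)
  moreover have "cramer_inv X = matrix_inv X"
    using X by (simp add: vec_eq_iff matrix_inv_cramer cramer_inv_def)
  ultimately show ?thesis
    using Lim_transform_eventually by metis
qed

definition scale_matrix :: "'a::comm_ring_1 \<Rightarrow> 'a^'n^'m \<Rightarrow> 'a^'n^'m" where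
  "scale_matrix c X = (\<chi> i j. c * X $ i $ j)"

lemma scale_matrix_nth [simp]: "scale_matrix c X $ i $ j = c * X $ i $ j"
  by (simp add: scale_matrix_def)

lemma scale_matrix_mult_left [simp]: "scale_matrix c X ** Y = scale_matrix c (X ** Y)"
  by (simp add: vec_eq_iff matrix_matrix_mult_def sum_distrib_left mult.assoc)

lemma scale_matrix_mult_right [simp]: "X ** scale_matrix c Y = scale_matrix c (X ** Y)"
  by (simp add: vec_eq_iff matrix_matrix_mult_def sum_distrib_left mult_ac)

lemma mat_mult_left [simp]: "mat c ** X = scale_matrix c X"
  by (simp add: vec_eq_iff matrix_matrix_mult_def mat_def if_distrib if_distribR sum.delta
      cong: if_cong)

lemma mat_mult_right [simp]: "X ** mat c = scale_matrix c X"
  by (simp add: vec_eq_iff matrix_matrix_mult_def mat_def if_distrib if_distribR sum.delta'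
      mult.commute cong: if_cong)

lemma scale_matrix_scale_matrix [simp]: "scale_matrix c (scale_matrix d X) = scale_matrix (c * d) X"
  by (simp add: vec_eq_iff mult.assoc)

lemma scale_matrix_1 [simp]: "scale_matrix 1 X = X"
  by (simp add: vec_eq_iff)

lemma scale_matrix_0 [simp]: "scale_matrix 0 X = 0"
  by (simp add: vec_eq_iff)

lemma scale_matrix_zero [simp]: "scale_matrix c 0 = 0"
  by (simp add: vec_eq_iff)

lemma scale_matrix_mat [simp]: "scale_matrix c (mat d) = mat (c * d)"
  by (simp add: vec_eq_iff mat_def)

lemma uminus_eq_scale_matrix [simp]: "- X = scale_matrix (-1) X"
  by (simp add: vec_eq_iff)

lemma scale_matrix_add [simp]: "scale_matrix c X + scale_matrix d X = scale_matrix (c + d) X"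
  by (simp add: vec_eq_iff algebra_simps)

lemma diff_eq_add_scale_matrix: "X - Y = X + scale_matrix (-1) Y"
  by (simp add: vec_eq_iff)

lemma scaleR_eq_scale_matrix [simp]:
  "r *\<^sub>R (X :: complex^'n^'m) = scale_matrix (complex_of_real r) X"
  by (simp add: vec_eq_iff scaleR_conv_of_real[where 'a = complex])

lemma cmat_mult [simp]: "cmat (X ** Y) = cmat X ** cmat Y"
  by (simp add: vec_eq_iff cmat_def matrix_matrix_mult_def)

lemma cmat_add [simp]: "cmat (X + Y) = cmat X + cmat Y"
  by (simp add: vec_eq_iff cmat_def)

lemma cmat_scaleR [simp]: "cmat (c *\<^sub>R X) = scale_matrix (complex_of_real c) (cmat X)"
  by (simp add: vec_eq_iff cmat_def)

lemma cmat_scale_matrix [simp]: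
  "cmat (scale_matrix c X) = scale_matrix (complex_of_real c) (cmat X)"
  by (simp add: vec_eq_iff cmat_def)

lemma cmat_0 [simp]: "cmat 0 = 0"
  by (simp add: vec_eq_iff cmat_def)

lemma cmat_mat [simp]: "cmat (mat c) = mat (complex_of_real c)"
  by (simp add: vec_eq_iff cmat_def mat_def)

lemma det_cmat: "det (cmat X) = complex_of_real (det X)"
  by (simp add: det_def cmat_def)

lemma sum_UNIV_sum:
  fixes f :: "'a::finite + 'b::finite \<Rightarrow> 'c::comm_monoid_add"
  shows "(\<Sum>x\<in>UNIV. f x) = (\<Sum>a\<in>UNIV. f (Inl a)) + (\<Sum>b\<in>UNIV. f (Inr b))"
  by (subst UNIV_Plus_UNIV[symmetric], subst sum.Plus) (auto simp: comp_def)

lemma block3_nth [simp]: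
  "\<And>a b. block3 M11 M12 M13 M21 M22 M23 M31 M32 M33 $ Inl a $ Inl b = M11 $ a $ b"
  "\<And>a b. block3 M11 M12 M13 M21 M22 M23 M31 M32 M33 $ Inl a $ Inr (Inl b) = M12 $ a $ b"
  "\<And>a b. block3 M11 M12 M13 M21 M22 M23 M31 M32 M33 $ Inl a $ Inr (Inr b) = M13 $ a $ b"
  "\<And>a b. block3 M11 M12 M13 M21 M22 M23 M31 M32 M33 $ Inr (Inl a) $ Inl b = M21 $ a $ b"
  "\<And>a b. block3 M11 M12 M13 M21 M22 M23 M31 M32 M33 $ Inr (Inl a) $ Inr (Inl b) = M22 $ a $ b"
  "\<And>a b. block3 M11 M12 M13 M21 M22 M23 M31 M32 M33 $ Inr (Inl a) $ Inr (Inr b) = M23 $ a $ b"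
  "\<And>a b. block3 M11 M12 M13 M21 M22 M23 M31 M32 M33 $ Inr (Inr a) $ Inl b = M31 $ a $ b"
  "\<And>a b. block3 M11 M12 M13 M21 M22 M23 M31 M32 M33 $ Inr (Inr a) $ Inr (Inl b) = M32 $ a $ b"
  "\<And>a b. block3 M11 M12 M13 M21 M22 M23 M31 M32 M33 $ Inr (Inr a) $ Inr (Inr b) = M33 $ a $ b"
  by (simp_all add: block3_def)

lemma block32_nth [simp]:
  "\<And>a b. block32 M11 M12 M21 M22 M31 M32 $ Inl a $ Inl b = M11 $ a $ b"
  "\<And>a b. block32 M11 M12 M21 M22 M31 M32 $ Inl a $ Inr b = M12 $ a $ b"
  "\<And>a b. block32 M11 M12 M21 M22 M31 M32 $ Inr (Inl a) $ Inl b = M21 $ a $ b"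
  "\<And>a b. block32 M11 M12 M21 M22 M31 M32 $ Inr (Inl a) $ Inr b = M22 $ a $ b"
  "\<And>a b. block32 M11 M12 M21 M22 M31 M32 $ Inr (Inr a) $ Inl b = M31 $ a $ b"
  "\<And>a b. block32 M11 M12 M21 M22 M31 M32 $ Inr (Inr a) $ Inr b = M32 $ a $ b"
  by (simp_all add: block32_def)

lemma block23_nth [simp]:
  "\<And>a b. block23 M11 M12 M13 M21 M22 M23 $ Inl a $ Inl b = M11 $ a $ b"
  "\<And>a b. block23 M11 M12 M13 M21 M22 M23 $ Inl a $ Inr (Inl b) = M12 $ a $ b"
  "\<And>a b. block23 M11 M12 M13 M21 M22 M23 $ Inl a $ Inr (Inr b) = M13 $ a $ b"
  "\<And>a b. block23 M11 M12 M13 M21 M22 M23 $ Inr a $ Inl b = M21 $ a $ b"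
  "\<And>a b. block23 M11 M12 M13 M21 M22 M23 $ Inr a $ Inr (Inl b) = M22 $ a $ b"
  "\<And>a b. block23 M11 M12 M13 M21 M22 M23 $ Inr a $ Inr (Inr b) = M23 $ a $ b"
  by (simp_all add: block23_def)

lemma block2_nth [simp]:
  "\<And>a b. block2 M11 M12 M21 M22 $ Inl a $ Inl b = M11 $ a $ b"
  "\<And>a b. block2 M11 M12 M21 M22 $ Inl a $ Inr b = M12 $ a $ b"
  "\<And>a b. block2 M11 M12 M21 M22 $ Inr a $ Inl b = M21 $ a $ b"
  "\<And>a b. block2 M11 M12 M21 M22 $ Inr a $ Inr b = M22 $ a $ b"
  by (simp_all add: block2_def)

lemma block3_eq_iff:
  "block3 X11 X12 X13 X21 X22 X23 X31 X32 X33 = block3 Y11 Y12 Y13 Y21 Y22 Y23 Y31 Y32 Y33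
   \<longleftrightarrow> X11 = Y11 \<and> X12 = Y12 \<and> X13 = Y13 \<and> X21 = Y21 \<and> X22 = Y22 \<and> X23 = Y23 \<and>
       X31 = Y31 \<and> X32 = Y32 \<and> X33 = Y33"
  by (auto simp: vec_eq_iff split_sum_all)

lemma block3_add:
  "block3 X11 X12 X13 X21 X22 X23 X31 X32 X33 + block3 Y11 Y12 Y13 Y21 Y22 Y23 Y31 Y32 Y33
   = block3 (X11 + Y11) (X12 + Y12) (X13 + Y13) (X21 + Y21) (X22 + Y22) (X23 + Y23)
       (X31 + Y31) (X32 + Y32) (X33 + Y33)"
  by (simp add: vec_eq_iff split_sum_all)

lemma scale_matrix_block3:
  "scale_matrix c (block3 X11 X12 X13 X21 X22 X23 X31 X32 X33)
   = block3 (scale_matrix c X11) (scale_matrix c X12) (scale_matrix c X13)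
       (scale_matrix c X21) (scale_matrix c X22) (scale_matrix c X23)
       (scale_matrix c X31) (scale_matrix c X32) (scale_matrix c X33)"
  by (simp add: vec_eq_iff split_sum_all)

lemma mat_block3: "mat c = block3 (mat c) 0 0 0 (mat c) 0 0 0 (mat c)"
  by (simp add: vec_eq_iff split_sum_all mat_def)

lemma cmat_block3:
  "cmat (block3 X11 X12 X13 X21 X22 X23 X31 X32 X33)
   = block3 (cmat X11) (cmat X12) (cmat X13) (cmat X21) (cmat X22) (cmat X23)
       (cmat X31) (cmat X32) (cmat X33)"
  by (simp add: vec_eq_iff split_sum_all cmat_def)

lemma block3_mult:
  fixes X11 :: "'a::semiring_1^'k1^'r1"
  shows "block3 X11 X12 X13 X21 X22 X23 X31 X32 X33 ** block3 Y11 Y12 Y13 Y21 Y22 Y23 Y31 Y32 Y33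
   = block3 (X11 ** Y11 + X12 ** Y21 + X13 ** Y31) (X11 ** Y12 + X12 ** Y22 + X13 ** Y32)
       (X11 ** Y13 + X12 ** Y23 + X13 ** Y33)
     (X21 ** Y11 + X22 ** Y21 + X23 ** Y31) (X21 ** Y12 + X22 ** Y22 + X23 ** Y32)
       (X21 ** Y13 + X22 ** Y23 + X23 ** Y33)
     (X31 ** Y11 + X32 ** Y21 + X33 ** Y31) (X31 ** Y12 + X32 ** Y22 + X33 ** Y32)
       (X31 ** Y13 + X32 ** Y23 + X33 ** Y33)"
  by (simp add: vec_eq_iff split_sum_all matrix_matrix_mult_def sum_UNIV_sum add.assoc)

lemma block32_mult_block2:
  fixes X11 :: "'a::semiring_1^'k1^'r1"
  shows "block32 X11 X12 X21 X22 X31 X32 ** block2 Y11 Y12 Y21 Y22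
   = block32 (X11 ** Y11 + X12 ** Y21) (X11 ** Y12 + X12 ** Y22)
       (X21 ** Y11 + X22 ** Y21) (X21 ** Y12 + X22 ** Y22)
       (X31 ** Y11 + X32 ** Y21) (X31 ** Y12 + X32 ** Y22)"
  by (simp add: vec_eq_iff split_sum_all matrix_matrix_mult_def sum_UNIV_sum)

lemma block32_mult_block23:
  fixes X11 :: "'a::semiring_1^'k1^'r1"
  shows "block32 X11 X12 X21 X22 X31 X32 ** block23 Y11 Y12 Y13 Y21 Y22 Y23
   = block3 (X11 ** Y11 + X12 ** Y21) (X11 ** Y12 + X12 ** Y22) (X11 ** Y13 + X12 ** Y23)
       (X21 ** Y11 + X22 ** Y21) (X21 ** Y12 + X22 ** Y22) (X21 ** Y13 + X22 ** Y23)
       (X31 ** Y11 + X32 ** Y21) (X31 ** Y12 + X32 ** Y22) (X31 ** Y13 + X32 ** Y23)"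
  by (simp add: vec_eq_iff split_sum_all matrix_matrix_mult_def sum_UNIV_sum)

lemma hurwitz_det_nonzero:
  assumes "hurwitz A"
  shows "det A \<noteq> 0"
proof
  assume "det A = 0"
  have "mat 0 - cmat A = mat (-1) ** cmat A"
    by (simp add: diff_eq_add_scale_matrix)
  then have "det (mat 0 - cmat A) = 0"
    using \<open>det A = 0\<close> by (simp only: det_mul det_cmat) simp
  with assms have "Re 0 < 0"
    unfolding hurwitz_def by blast
  then show False
    by simp
qed

definition scale_first_block ::
  "complex \<Rightarrow> complex^('n::finite+('p::finite+'r::finite))^('n+('p+'r))" where
  "scale_first_block c = block3 (mat c) 0 0 0 (mat 1) 0 0 0 (mat 1)"

lemma scale_first_block_mult:
  "scale_first_block c ** scale_first_block d = scale_first_block (c * d)"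
  by (simp add: scale_first_block_def block3_mult mult.commute)

lemma scale_first_block_1: "scale_first_block 1 = mat 1"
  by (simp add: scale_first_block_def mat_block3[symmetric])

lemma scale_first_block_Bbold: "scale_first_block c ** Bbold A B C1 C2 mu = Bbold A B C1 C2 mu"
  by (simp add: scale_first_block_def Bbold_def block3_mult)

definition scaled_char_matrix ::
  "real^('n::finite)^'n \<Rightarrow> real^('p::finite)^'n \<Rightarrow> real \<Rightarrow> real \<Rightarrow> real \<Rightarrow> complex \<Rightarrow> real
    \<Rightarrow> complex^('n+('p+('r::finite)))^('n+('p+'r))" where
  "scaled_char_matrix A B m mu rho s eps = block3
      (mat (complex_of_real eps * (s - complex_of_real rho)) - cmat A) (- cmat B) 0
      0 (mat (s + complex_of_real (m - rho))) 0
      0 0 (mat (s + complex_of_real (mu - rho)))"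

lemma char_matrix_eq_scaled:
  assumes "eps \<noteq> 0"
  shows "mat s - cmat (Aepsrho A B m mu eps rho)
    = scale_first_block (complex_of_real (1 / eps)) ** scaled_char_matrix A B m mu rho s eps"
  using assms
  unfolding Aepsrho_def Aeps_def scale_first_block_def scaled_char_matrix_def
  by (simp add: cmat_block3 mat_block3 block3_mult block3_add block3_eq_iff scale_matrix_block3
      diff_eq_add_scale_matrix)
    (auto simp: vec_eq_iff mat_def field_simps)

lemma Gbold_eq_scaled_char_matrix:
  fixes A :: "real^'n^'n" and B :: "real^'p^'n" and C2 :: "real^'n^'r2"
  assumes "eps \<noteq> 0"
    and "det (scaled_char_matrix A B m mu rho s eps :: complex^('n+('p+'r2))^('n+('p+'r2))) \<noteq> 0"
  shows "Gbold A B C1 C2 m mu eps rho s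
    = Cbold C1 C2 mu ** matrix_inv (scaled_char_matrix A B m mu rho s eps) ** Bbold A B C1 C2 mu"
proof -
  let ?N = "scaled_char_matrix A B m mu rho s eps"
  let ?D = "\<lambda>c. scale_first_block c :: complex^('n+('p+'r2))^('n+('p+'r2))"
  have "(?D (complex_of_real (1 / eps)) ** ?N) ** (matrix_inv ?N ** ?D (complex_of_real eps))
      = ?D (complex_of_real (1 / eps)) ** (?N ** matrix_inv ?N) ** ?D (complex_of_real eps)"
    by (simp only: matrix_mul_assoc)
  also have "\<dots> = ?D (complex_of_real (1 / eps)) ** ?D (complex_of_real eps)"
    using matrix_inv_right[OF assms(2)] by simp
  also have "\<dots> = mat 1"
    using assms(1) by (simp add: scale_first_block_mult scale_first_block_1)
  finally have "matrix_inv (mat s - cmat (Aepsrho A B m mu eps rho))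
      = matrix_inv ?N ** ?D (complex_of_real eps)"
    unfolding char_matrix_eq_scaled[OF assms(1)] by (rule matrix_inv_unique)
  then show ?thesis
    unfolding Gbold_def by (simp only: matrix_mul_assoc[symmetric] scale_first_block_Bbold)
qed

lemma tendsto_scaled_char_matrix:
  fixes A :: "real^'n^'n" and B :: "real^'p^'n"
  shows "((scaled_char_matrix A B m mu rho s :: real \<Rightarrow> complex^('n+('p+'r::finite))^('n+('p+'r)))
    \<longlongrightarrow> scaled_char_matrix A B m mu rho s eps0) (at eps0 within S)"
proof -
  define E :: "complex^('n+('p+'r))^('n+('p+'r))"
    where "E = block3 (mat (s - complex_of_real rho)) 0 0 0 0 0 0 0 0"
  have affine: "scaled_char_matrix A B m mu rho s eps = scaled_char_matrix A B m mu rho s 0 + eps *\<^sub>R E"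
    for eps
    by (simp add: scaled_char_matrix_def E_def vec_eq_iff split_sum_all mat_def)
  have "((\<lambda>eps. scaled_char_matrix A B m mu rho s 0 + eps *\<^sub>R E)
      \<longlongrightarrow> scaled_char_matrix A B m mu rho s 0 + eps0 *\<^sub>R E) (at eps0 within S)"
    by (intro tendsto_intros)
  then show ?thesis
    by (simp only: affine[symmetric])
qed

lemma scaled_char_matrix_0:
  fixes A :: "real^'n^'n" and B :: "real^'p^'n" and C2 :: "real^'n^'r2"
  assumes "det A \<noteq> 0"
    and "s \<noteq> - complex_of_real (m - rho)" and "s \<noteq> - complex_of_real (mu - rho)"
  shows "det (scaled_char_matrix A B m mu rho s 0 :: complex^('n+('p+'r2))^('n+('p+'r2))) \<noteq> 0"
    and "Cbold C1 C2 mu ** matrix_inv (scaled_char_matrix A B m mu rho s 0) ** Bbold A B C1 C2 mu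
      = Hbold A B C1 C2 m mu rho s"
proof -
  define a where "a = s + complex_of_real (m - rho)"
  define b where "b = s + complex_of_real (mu - rho)"
  have "a \<noteq> 0" "b \<noteq> 0"
    using assms(2,3) by (auto simp: a_def b_def add_eq_0_iff2)
  have "cmat A ** cmat (matrix_inv A) = mat 1"
    using matrix_inv_right[OF assms(1)] by (metis cmat_mult cmat_mat of_real_1)
  then have inverse: "scaled_char_matrix A B m mu rho s 0
      ** block3 (- cmat (matrix_inv A)) (scale_matrix (- inverse a) (cmat (matrix_inv A) ** cmat B)) 0
           0 (mat (inverse a)) 0
           0 0 (mat (inverse b))
    = (mat 1 :: complex^('n+('p+'r2))^('n+('p+'r2)))"
    using \<open>a \<noteq> 0\<close> \<open>b \<noteq> 0\<close>
    by (simp add: scaled_char_matrix_def block3_mult mat_block3 block3_eq_iff matrix_mul_assoc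
        a_def b_def)
  then show "det (scaled_char_matrix A B m mu rho s 0 :: complex^('n+('p+'r2))^('n+('p+'r2))) \<noteq> 0"
    using invertible_det_nz invertible_right_inverse by blast
  show "Cbold C1 C2 mu ** matrix_inv (scaled_char_matrix A B m mu rho s 0) ** Bbold A B C1 C2 mu
      = Hbold A B C1 C2 m mu rho s"
    unfolding matrix_inv_unique[OF inverse] Cbold_def Bbold_def Hbold_def Piu_def a_def b_def
    by (simp add: block3_mult block32_mult_block2 block32_mult_block23 block3_eq_iff matrix_mul_assoc
        add_ac)
qed

theorem lemma1:
  fixes A :: "real^'n^'n" and B :: "real^'p^'n"
    and C1 :: "real^'n^'r1" and C2 :: "real^'n^'r2"
    and m mu rho :: real and s :: complex
  assumes "hurwitz A" and "m > 0" and "mu > 0" and "rho \<ge> 0"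
    and "s \<noteq> - complex_of_real (m - rho)" and "s \<noteq> - complex_of_real (mu - rho)"
  shows "((\<lambda>eps. Gbold A B C1 C2 m mu eps rho s) \<longlongrightarrow> Hbold A B C1 C2 m mu rho s) (at_right 0)"
proof -
  let ?N = "scaled_char_matrix A B m mu rho s :: real \<Rightarrow> complex^('n+('p+'r2))^('n+('p+'r2))"
  note N0 = scaled_char_matrix_0[OF hurwitz_det_nonzero[OF assms(1)] assms(5,6)]
  have N: "(?N \<longlongrightarrow> ?N 0) (at_right 0)"
    by (rule tendsto_scaled_char_matrix)
  have "((\<lambda>eps. Cbold C1 C2 mu ** matrix_inv (?N eps) ** Bbold A B C1 C2 mu) \<longlongrightarrow> Hbold A B C1 C2 m mu rho s)
      (at_right 0)"
    unfolding N0(2)[symmetric] by (intro tendsto_intros tendsto_matrix_inv N N0(1))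
  moreover have "\<forall>\<^sub>F eps in at_right 0.
      Cbold C1 C2 mu ** matrix_inv (?N eps) ** Bbold A B C1 C2 mu = Gbold A B C1 C2 m mu eps rho s"
    using tendsto_imp_eventually_ne[OF tendsto_det[OF N] N0(1)] eventually_at_right_less
    by eventually_elim (simp add: Gbold_eq_scaled_char_matrix)
  ultimately show ?thesis
    by (rule Lim_transform_eventually)
qed

end
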